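(* For $\alpha\in[1/2,1)$ consider the singular initial value problem $$h'(\theta)=-\frac{1}{\sin\theta}\big(\alpha h(\theta)^2-\cos\theta\,h(\theta)+1-\alpha\big),\quad 0<\theta\le\frac{\pi}{2},\qquad h(0)=1,\qquad(\ast)$$ where a (classical) solution is a function $h\in C[0,\pi/2]\cap C^1(0,\pi/2]$ satisfying the equation on $(0,\pi/2]$ and $h(0)=1$. (i) If $\alpha\in(1/2,1)$, then $(\ast)$ has a unique solution $h(\alpha,\cdot)$; moreover, if $1/2<\alpha_1<\alpha_2<1$ then $h(\alpha_1,\theta)<h(\alpha_2,\theta)$ for all $\theta\in(0,\pi/2]$. (ii) If $\alpha=1/2$, then $(\ast)$ has infinitely many (a continuum of) positive solutions. (iii) Let $\alpha\in(1/2,1)$ and let $\overline h\in C[0,\pi/2]\cap C^1(0,\pi/2]$ satisfy $\overline h'(\theta)\ge-\frac{1}{\sin\theta}\big(\alpha\overline h(\theta)^2-\cos\theta\,\overline h(\theta)+1-\alpha\big)$ for $0<\theta\le\pi/2$ and $\overline h(0)\ge1$. Then $h(\alpha,\theta)\le\overline h(\theta)$ for all $0\le\theta\le\pi/2$. *)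

theory Defs
  imports "HOL-Analysis.Analysis"
begin

definition rhs :: "real \<Rightarrow> real \<Rightarrow> real \<Rightarrow> real" where
  "rhs \<alpha> \<theta> y = - (1 / sin \<theta>) * (\<alpha> * y\<^sup>2 - cos \<theta> * y + 1 - \<alpha>)"

definition C0C1_with_deriv :: "(real \<Rightarrow> real) \<Rightarrow> (real \<Rightarrow> real) \<Rightarrow> bool" where
  "C0C1_with_deriv h h' \<longleftrightarrow>
     continuous_on {0..pi/2} h \<and>
     (\<forall>\<theta>\<in>{0<..pi/2}. (h has_real_derivative h' \<theta>) (at \<theta> within {0<..pi/2})) \<and>
     continuous_on {0<..pi/2} h'"

definition is_solution :: "real \<Rightarrow> (real \<Rightarrow> real) \<Rightarrow> bool" where
  "is_solution \<alpha> h \<longleftrightarrow>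
     (\<exists>h'. C0C1_with_deriv h h' \<and> (\<forall>\<theta>\<in>{0<..pi/2}. h' \<theta> = rhs \<alpha> \<theta> (h \<theta>))) \<and> h 0 = 1"

definition is_supersolution :: "real \<Rightarrow> (real \<Rightarrow> real) \<Rightarrow> bool" where
  "is_supersolution \<alpha> h \<longleftrightarrow>
     (\<exists>h'. C0C1_with_deriv h h' \<and> (\<forall>\<theta>\<in>{0<..pi/2}. h' \<theta> \<ge> rhs \<alpha> \<theta> (h \<theta>))) \<and> h 0 \<ge> 1"

end

theory Submission
  imports Defs
begin

text \<open>
  The substitution z = sin(\<theta>/2)^2 turns it into the Riccati equation
  2z(1-z) H' = -(a H^2 - (1-2z) H + 1 - a), which the classical linearisation
  H = 1 - 2z + 2z(1-z) F'/(a F) reduces to the hypergeometric equation for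
  F = 2F1(a, a; a+1/2; z).
\<close>


section \<open>The hypergeometric series F = 2F1(a, a; a + 1/2; z)\<close>

primrec hyp_coeff :: "real \<Rightarrow> nat \<Rightarrow> real" where
  "hyp_coeff a 0 = 1"
| "hyp_coeff a (Suc k) = hyp_coeff a k * (a + real k)^2 / ((real k + 1) * (real k + a + 1/2))"

lemma hyp_coeff_pos: "0 < a \<Longrightarrow> 0 < hyp_coeff a k"
  by (induction k) auto

lemma hyp_coeff_rec:
  assumes "0 < a"
  shows "(real k + 1) * (real k + a + 1/2) * hyp_coeff a (Suc k) = (a + real k)^2 * hyp_coeff a k"
proof -
  have "(real k + 1) * (real k + a + 1/2) \<noteq> 0" using assms by (simp add: add_pos_pos)
  thus ?thesis by simp
qed

text \<open>For 1/2 \<le> a < 1 the ratio of consecutive coefficients is at most 1, so the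
  coefficients are bounded by 1 and the series converges on the unit disc.\<close>
lemma hyp_coeff_le_1:
  assumes "1/2 \<le> a" "a < 1" shows "hyp_coeff a k \<le> 1"
proof (induction k)
  case 0 then show ?case by simp
next
  case (Suc k)
  have ratio: "(a + real k)^2 \<le> (real k + 1) * (real k + a + 1/2)"
  proof -
    have "a * a \<le> a" using assms by (simp add: mult_left_le)
    moreover have "a * real k \<le> 3/2 * real k" using assms by (intro mult_right_mono) auto
    moreover have "(a + real k)^2 = a * a + 2 * (a * real k) + real k * real k"
      by (simp add: power2_eq_square algebra_simps)
    moreover have "(real k + 1) * (real k + a + 1/2)
        = real k * real k + a * real k + 3/2 * real k + a + 1/2"
      by (simp add: algebra_simps add_divide_distrib)
    ultimately show ?thesis by linarith
  qed
  have "hyp_coeff a (Suc k) = hyp_coeff a k * ((a + real k)^2 / ((real k + 1) * (real k + a + 1/2)))"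
    by simp
  also have "\<dots> \<le> 1 * 1"
    using Suc hyp_coeff_pos[of a k] ratio assms
    by (intro mult_mono) (auto simp: divide_le_eq_1)
  finally show ?case by simp
qed

declare hyp_coeff.simps(2)[simp del]

definition hyp_fps :: "real \<Rightarrow> real fps" where
  "hyp_fps a = Abs_fps (hyp_coeff a)"

lemma hyp_fps_nth [simp]: "fps_nth (hyp_fps a) n = hyp_coeff a n"
  by (simp add: hyp_fps_def)

lemma conv_radius_ge_1_if_bounded:
  fixes c :: "nat \<Rightarrow> real"
  assumes "\<And>n. \<bar>c n\<bar> \<le> 1" shows "1 \<le> conv_radius c"
proof (rule conv_radius_geI_ex')
  fix r :: real assume r: "0 < r" "ereal r < 1"
  show "summable (\<lambda>n. c n * of_real r ^ n)"
  proof (rule summable_comparison_test[of _ "\<lambda>n. r ^ n"])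
    show "\<exists>N. \<forall>n\<ge>N. norm (c n * of_real r ^ n) \<le> r ^ n"
      using assms r by (auto simp: abs_mult intro!: mult_left_le_one_le)
    show "summable (\<lambda>n. r ^ n)" using r by (simp add: summable_geometric)
  qed
qed

lemma hyp_fps_radius: "1/2 \<le> a \<Longrightarrow> a < 1 \<Longrightarrow> 1 \<le> fps_conv_radius (hyp_fps a)"
  unfolding fps_conv_radius_def
  by (rule conv_radius_ge_1_if_bounded) (simp add: hyp_coeff_le_1 hyp_coeff_pos abs_of_pos)

lemma radius_ge_1_add:
  "1 \<le> fps_conv_radius f \<Longrightarrow> 1 \<le> fps_conv_radius g \<Longrightarrow> 1 \<le> fps_conv_radius (f + g)"
  using fps_conv_radius_add[of f g] by (meson min.boundedI order.trans)
lemma radius_ge_1_diff: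
  "1 \<le> fps_conv_radius f \<Longrightarrow> 1 \<le> fps_conv_radius g \<Longrightarrow> 1 \<le> fps_conv_radius (f - g)"
  using fps_conv_radius_diff[of f g] by (meson min.boundedI order.trans)
lemma radius_ge_1_mult:
  "1 \<le> fps_conv_radius f \<Longrightarrow> 1 \<le> fps_conv_radius g \<Longrightarrow> 1 \<le> fps_conv_radius (f * (g::real fps))"
  using fps_conv_radius_mult[of f g] by (meson min.boundedI order.trans)
lemma radius_ge_1_deriv:
  "1 \<le> fps_conv_radius f \<Longrightarrow> 1 \<le> fps_conv_radius (fps_deriv (f :: real fps))"
  using fps_conv_radius_deriv[of f] by (simp add: order_trans)

lemmas radius_ge_1_intros = radius_ge_1_add radius_ge_1_diff radius_ge_1_mult radius_ge_1_deriv

lemma inside_radius: "1 \<le> fps_conv_radius f \<Longrightarrow> \<bar>z\<bar> < 1 \<Longrightarrow> norm (z::real) < fps_conv_radius f"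
  by (metis ereal_less(3) less_le_trans real_norm_def)

lemma eval_fps_hom:
  assumes "1 \<le> fps_conv_radius f" "1 \<le> fps_conv_radius g" "\<bar>z\<bar> < 1"
  shows "eval_fps (f + g) z = eval_fps f z + eval_fps g (z::real)"
    and "eval_fps (f - g) z = eval_fps f z - eval_fps g z"
    and "eval_fps (f * g) z = eval_fps f z * eval_fps g z"
  using assms by (intro eval_fps_add eval_fps_diff eval_fps_mult inside_radius; simp)+

lemma eval_fps_ge_head:
  fixes G :: "real fps"
  assumes "1 \<le> fps_conv_radius G" "0 \<le> z" "z < 1" "\<And>n. 0 \<le> fps_nth G n"
  shows "fps_nth G 0 \<le> eval_fps G z"
proof -
  have "summable (\<lambda>n. fps_nth G n * z ^ n)" using assms by (intro summable_fps inside_radius) auto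
  hence "sum (\<lambda>n. fps_nth G n * z ^ n) {..<1} \<le> (\<Sum>n. fps_nth G n * z ^ n)"
    by (rule sum_le_suminf) (use assms in auto)
  thus ?thesis by (simp add: eval_fps_def)
qed

lemma hyp_fps_ode:
  assumes "0 < a"
  defines "D \<equiv> fps_deriv (hyp_fps a)"
  shows "fps_X * fps_deriv D - fps_X * (fps_X * fps_deriv D) + fps_const (a + 1/2) * D
          - fps_const (2*a+1) * (fps_X * D) - fps_const (a^2) * hyp_fps a = 0"
proof (rule fps_ext)
  fix n
  have nth: "fps_nth (fps_X * fps_deriv D) n = real n * (real n + 1) * hyp_coeff a (Suc n)"
    "fps_nth (fps_X * (fps_X * fps_deriv D)) n = real n * (real n - 1) * hyp_coeff a n"
    "fps_nth (fps_X * D) n = real n * hyp_coeff a n"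
    "fps_nth D n = (real n + 1) * hyp_coeff a (Suc n)"
    by (cases n; cases "n - 1"; simp add: D_def algebra_simps)+
  have "real n * (real n + 1) * hyp_coeff a (Suc n) - real n * (real n - 1) * hyp_coeff a n
        + (a + 1/2) * ((real n + 1) * hyp_coeff a (Suc n)) - (2*a+1) * (real n * hyp_coeff a n)
        - a^2 * hyp_coeff a n
        = (real n + 1) * (real n + a + 1/2) * hyp_coeff a (Suc n) - (a + real n)^2 * hyp_coeff a n"
    by (simp add: algebra_simps power2_eq_square add_divide_distrib)
  also have "\<dots> = 0" using hyp_coeff_rec[OF assms(1), of n] by simp
  finally show "fps_nth (fps_X * fps_deriv D - fps_X * (fps_X * fps_deriv D) + fps_const (a + 1/2) * D
          - fps_const (2*a+1) * (fps_X * D) - fps_const (a^2) * hyp_fps a) n = fps_nth 0 n"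
    by (simp only: fps_sub_nth fps_add_nth fps_mult_left_const_nth nth fps_zero_nth hyp_fps_nth)
qed

definition hyp :: "real \<Rightarrow> real \<Rightarrow> real" where
  "hyp a = eval_fps (hyp_fps a)"
definition hyp_d1 :: "real \<Rightarrow> real \<Rightarrow> real" where
  "hyp_d1 a = eval_fps (fps_deriv (hyp_fps a))"
definition hyp_d2 :: "real \<Rightarrow> real \<Rightarrow> real" where
  "hyp_d2 a = eval_fps (fps_deriv (fps_deriv (hyp_fps a)))"

context
  fixes a :: real
  assumes a: "1/2 \<le> a" "a < 1"
begin

lemma hyp_has_deriv: "\<bar>z\<bar> < 1 \<Longrightarrow> (hyp a has_real_derivative hyp_d1 a z) (at z within A)"
  unfolding hyp_def hyp_d1_def
  by (intro has_field_derivative_eval_fps inside_radius hyp_fps_radius a)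

lemma hyp_d1_has_deriv: "\<bar>z\<bar> < 1 \<Longrightarrow> (hyp_d1 a has_real_derivative hyp_d2 a z) (at z within A)"
  unfolding hyp_d1_def hyp_d2_def
  by (intro has_field_derivative_eval_fps inside_radius radius_ge_1_deriv hyp_fps_radius a)

lemma hyp_ode:
  assumes "\<bar>z\<bar> < 1"
  shows "z * (1 - z) * hyp_d2 a z + (a + 1/2) * (1 - 2*z) * hyp_d1 a z - a^2 * hyp a z = 0"
proof -
  have R: "1 \<le> fps_conv_radius (hyp_fps a)" using hyp_fps_radius a by simp
  have "eval_fps (fps_X * fps_deriv (fps_deriv (hyp_fps a))
          - fps_X * (fps_X * fps_deriv (fps_deriv (hyp_fps a)))
          + fps_const (a + 1/2) * fps_deriv (hyp_fps a)
          - fps_const (2*a+1) * (fps_X * fps_deriv (hyp_fps a)) - fps_const (a^2) * hyp_fps a) z = 0"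
    using hyp_fps_ode[of a] a by simp
  hence "z * hyp_d2 a z - z * (z * hyp_d2 a z) + (a + 1/2) * hyp_d1 a z
         - (2*a+1) * (z * hyp_d1 a z) - a^2 * hyp a z = 0"
    using R assms unfolding hyp_def hyp_d1_def hyp_d2_def
    by (simp add: eval_fps_hom radius_ge_1_intros)
  thus ?thesis by (simp add: algebra_simps)
qed

lemma hyp_ge_1: "0 \<le> z \<Longrightarrow> z < 1 \<Longrightarrow> 1 \<le> hyp a z"
  using eval_fps_ge_head[of "hyp_fps a" z] hyp_fps_radius[OF a] hyp_coeff_pos[of a] a
  unfolding hyp_def by (simp add: less_imp_le)

lemma hyp_d1_ge: "0 \<le> z \<Longrightarrow> z < 1 \<Longrightarrow> hyp_coeff a 1 \<le> hyp_d1 a z"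
  using eval_fps_ge_head[of "fps_deriv (hyp_fps a)" z] radius_ge_1_deriv[OF hyp_fps_radius[OF a]]
    hyp_coeff_pos[of a] a
  unfolding hyp_d1_def by (simp add: less_imp_le)

lemma hyp_le_2:
  assumes "0 \<le> z" "z \<le> 1/2" shows "hyp a z \<le> 2"
proof -
  have "summable (\<lambda>n. fps_nth (hyp_fps a) n * z ^ n)"
    using assms by (intro summable_fps inside_radius hyp_fps_radius a) auto
  hence "summable (\<lambda>n. hyp_coeff a n * z ^ n)" by simp
  moreover have "summable (\<lambda>n. (1/2::real) ^ n)" by (simp add: summable_geometric)
  moreover have "hyp_coeff a n * z ^ n \<le> (1/2) ^ n" for n
  proof -
    have "z ^ n \<le> (1/2) ^ n" using assms by (intro power_mono) auto
    thus ?thesis using hyp_coeff_le_1[OF a, of n] hyp_coeff_pos[of a n] a assms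
      by (intro mult_left_le_one_le[THEN order_trans]) (auto intro: less_imp_le)
  qed
  ultimately have "(\<Sum>n. hyp_coeff a n * z ^ n) \<le> (\<Sum>n. (1/2::real) ^ n)"
    by (intro suminf_le) auto
  also have "\<dots> = 2" using suminf_geometric[of "1/2::real"] by simp
  finally show ?thesis by (simp add: hyp_def eval_fps_def)
qed

text \<open>The inequality (1-z) F' < a F on [0,1): by the recursion, the series a F - (1-z) F'
  has the positive coefficients (n+a) c n - (n+1) c (n+1) = (n+a) c n / (2n + 2a + 1).\<close>
lemma hyp_d1_bound:
  assumes "0 \<le> z" "z < 1"
  shows "(1 - z) * hyp_d1 a z < a * hyp a z"
proof -
  have a0: "0 < a" using a by simp
  define Q where "Q = fps_const a * hyp_fps a - (fps_deriv (hyp_fps a) - fps_X * fps_deriv (hyp_fps a))"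
  have Q_nth: "fps_nth Q n = (real n + a) * hyp_coeff a n - (real n + 1) * hyp_coeff a (Suc n)" for n
    by (cases n) (simp_all add: Q_def algebra_simps)
  have Q_pos: "0 < fps_nth Q n" for n
  proof -
    have d: "0 < real n + a + 1/2" using a0 by simp
    have p: "0 < (real n + a) * hyp_coeff a n" using hyp_coeff_pos[OF a0, of n] a0 by simp
    have "(real n + 1) * hyp_coeff a (Suc n) = ((real n + a) * hyp_coeff a n) * (real n + a) / (real n + a + 1/2)"
      using hyp_coeff_rec[OF a0, of n] d by (simp add: field_simps power2_eq_square)
    also have "\<dots> < (real n + a) * hyp_coeff a n"
      using mult_strict_left_mono[OF _ p, of "real n + a" "real n + a + 1/2"] d
      by (simp add: divide_less_eq)
    finally show ?thesis using Q_nth by simp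
  qed
  have RQ: "1 \<le> fps_conv_radius Q" unfolding Q_def
    using hyp_fps_radius[OF a] by (simp add: radius_ge_1_intros)
  have "0 < fps_nth Q 0" by (rule Q_pos)
  also have "\<dots> \<le> eval_fps Q z" using eval_fps_ge_head[OF RQ assms] Q_pos less_imp_le by blast
  also have "eval_fps Q z = a * hyp a z - (hyp_d1 a z - z * hyp_d1 a z)"
    unfolding Q_def hyp_def hyp_d1_def using hyp_fps_radius[OF a] assms
    by (simp add: eval_fps_hom radius_ge_1_intros)
  finally show ?thesis by (simp add: algebra_simps)
qed

definition hyp_tail :: "real \<Rightarrow> real" where
  "hyp_tail = eval_fps (fps_shift 1 (hyp_fps a))"

lemma hyp_tail_radius: "1 \<le> fps_conv_radius (fps_shift 1 (hyp_fps a))"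
  using hyp_fps_radius[OF a] by simp

lemma hyp_eq_tail: "\<bar>z\<bar> < 1 \<Longrightarrow> hyp a z = 1 + z * hyp_tail z"
proof -
  assume z: "\<bar>z\<bar> < 1"
  have "hyp_fps a = 1 + fps_X * fps_shift 1 (hyp_fps a)"
    by (rule fps_ext) (simp add: split: nat.split)
  hence "hyp a z = eval_fps (1 + fps_X * fps_shift 1 (hyp_fps a)) z" by (simp add: hyp_def)
  also have "\<dots> = 1 + z * hyp_tail z"
    using z hyp_tail_radius by (simp add: eval_fps_hom radius_ge_1_intros hyp_tail_def)
  finally show ?thesis .
qed

lemma hyp_tail_cont: "\<bar>z\<bar> < 1 \<Longrightarrow> isCont hyp_tail z"
  unfolding hyp_tail_def by (intro continuous_eval_fps inside_radius hyp_tail_radius)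

lemma hyp_tail_nonneg: "0 \<le> z \<Longrightarrow> z < 1 \<Longrightarrow> 0 \<le> hyp_tail z"
  using eval_fps_ge_head[OF hyp_tail_radius, of z] hyp_coeff_pos[of a] a
  unfolding hyp_tail_def by (fastforce intro: less_imp_le order_trans[rotated])

end

section \<open>The Riccati equation in the variable z = sin(\<theta>/2)^2\<close>

text \<open>With z = sin(\<theta>/2)^2 we have cos \<theta> = 1 - 2z and dz/d\<theta> = sin \<theta> / 2, so (*) becomes
  the Riccati equation 2z(1-z) H' = -(a H^2 - (1-2z) H + 1 - a).  It is linearised by
  H = 1 - 2z + 2z(1-z) F'/(a F) with F the hypergeometric function above.\<close>
definition ric :: "real \<Rightarrow> real \<Rightarrow> real" where
  "ric a z = 1 - 2*z + 2*z*(1-z) * hyp_d1 a z / (a * hyp a z)"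

definition ric_d :: "real \<Rightarrow> real \<Rightarrow> real" where
  "ric_d a z = -2 + (2/a) * ((1-2*z) * hyp_d1 a z / hyp a z + z*(1-z)*hyp_d2 a z / hyp a z
                          - z*(1-z) * (hyp_d1 a z)^2 / (hyp a z)^2)"

lemma ric_0 [simp]: "ric a 0 = 1"
  by (simp add: ric_def)

context
  fixes a :: real
  assumes a: "1/2 \<le> a" "a < 1"
begin

lemma ric_has_deriv:
  assumes "0 \<le> z" "z < 1"
  shows "(ric a has_real_derivative ric_d a z) (at z within A)"
proof -
  have F: "hyp a z \<noteq> 0" using hyp_ge_1[OF a assms] by simp
  have z: "\<bar>z\<bar> < 1" using assms by simp
  show ?thesis
    unfolding ric_def[abs_def]
    apply (rule DERIV_cong)
     apply (rule derivative_eq_intros hyp_has_deriv[OF a z] hyp_d1_has_deriv[OF a z] refl)+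
    using F a apply simp
      apply (rule refl)+
    using F a apply (simp add: ric_d_def field_simps power2_eq_square)
    done
qed

lemma ric_riccati:
  assumes "0 \<le> z" "z < 1"
  shows "2*z*(1-z) * ric_d a z = -(a * (ric a z)^2 - (1-2*z) * ric a z + 1 - a)"
proof -
  have F: "hyp a z \<noteq> 0" using hyp_ge_1[OF a assms] by simp
  have ode: "z*(1-z)*hyp_d2 a z = a^2 * hyp a z - (a + 1/2) * (1 - 2*z) * hyp_d1 a z"
    using hyp_ode[OF a, of z] assms by (simp add: algebra_simps)
  have d: "ric_d a z = -2 + (2/a) * ((1-2*z) * hyp_d1 a z / hyp a z
          + (a^2 * hyp a z - (a + 1/2) * (1 - 2*z) * hyp_d1 a z) / hyp a z
          - z*(1-z) * (hyp_d1 a z)^2 / (hyp a z)^2)"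
    unfolding ric_d_def ode[symmetric] by (simp add: mult.assoc)
  show ?thesis unfolding d ric_def using F a by (simp add: field_simps power2_eq_square)
qed

lemma ric_lt_1: "0 < z \<Longrightarrow> z < 1 \<Longrightarrow> ric a z < 1"
proof -
  assume z: "0 < z" "z < 1"
  have F: "0 < hyp a z" using hyp_ge_1[OF a, of z] z by simp
  have "2*z*(1-z) * hyp_d1 a z < 2 * z * (a * hyp a z)"
    using hyp_d1_bound[OF a, of z] z by simp
  hence "2*z*(1-z) * hyp_d1 a z / (a * hyp a z) < 2 * z" using F a by (simp add: divide_less_eq)
  thus ?thesis by (simp add: ric_def)
qed

lemma ric_ge: "0 \<le> z \<Longrightarrow> z \<le> 1/2 \<Longrightarrow> 1 - 2*z \<le> ric a z"
proof -
  assume z: "0 \<le> z" "z \<le> 1/2"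
  have "0 < hyp a z" using hyp_ge_1[OF a, of z] z by simp
  moreover have "0 \<le> hyp_d1 a z" using hyp_d1_ge[OF a, of z] hyp_coeff_pos[of a 1] a z by simp
  ultimately have "0 \<le> 2*z*(1-z) * hyp_d1 a z / (a * hyp a z)" using a z by simp
  thus ?thesis by (simp add: ric_def)
qed

end

section \<open>From the Riccati equation back to (*)\<close>

definition zsub :: "real \<Rightarrow> real" where
  "zsub t = (sin (t/2))^2"

lemma cos_zsub: "cos t = 1 - 2 * zsub t"
  using cos_double_sin[of "t/2"] by (simp add: zsub_def)

lemma zsub_0 [simp]: "zsub 0 = 0"
  by (simp add: zsub_def)

lemma zsub_pi_half [simp]: "zsub (pi/2) = 1/2"
  using cos_zsub[of "pi/2"] by simp

lemma zsub_range: "0 \<le> t \<Longrightarrow> t \<le> pi/2 \<Longrightarrow> 0 \<le> zsub t \<and> zsub t \<le> 1/2"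
  using cos_ge_zero[of t] cos_zsub[of t] by (simp add: zsub_def)

lemma zsub_pos: "0 < t \<Longrightarrow> t \<le> pi/2 \<Longrightarrow> 0 < zsub t"
  using sin_gt_zero[of "t/2"] pi_gt_zero by (simp add: zsub_def)

lemma zsub_has_deriv: "(zsub has_real_derivative sin t / 2) (at t within A)"
proof -
  have "(zsub has_real_derivative 2 * sin (t/2) * (cos (t/2) * (1/2))) (at t within A)"
    unfolding zsub_def[abs_def] by (auto intro!: derivative_eq_intros)
  thus ?thesis using sin_double[of "t/2"] by simp
qed

lemma zsub_cont: "continuous_on S zsub"
  by (rule continuous_at_imp_continuous_on) (auto intro!: DERIV_isCont[OF zsub_has_deriv])

lemma sin_pos_on_arc: "0 < t \<Longrightarrow> t \<le> pi/2 \<Longrightarrow> 0 < sin t"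
  using pi_gt_zero by (intro sin_gt_zero) auto

text \<open>The chain rule factor sin \<theta> / 2 turns the Riccati equation into (*), because
  sin^2 \<theta> = 4 z (1 - z).\<close>
lemma ode_from_riccati:
  assumes "0 < t" "t \<le> pi/2"
    and "2 * zsub t * (1 - zsub t) * D = - (a * y^2 - (1 - 2 * zsub t) * y + 1 - a)"
  shows "D * (sin t / 2) = rhs a t y"
proof -
  have "sin t = 2 * sin (t/2) * cos (t/2)" using sin_double[of "t/2"] by simp
  hence "(sin t)^2 = 4 * zsub t * (1 - zsub t)"
    by (simp add: zsub_def power2_eq_square cos_squared_eq[unfolded power2_eq_square])
  hence "(sin t)^2 / 2 * D = - (a * y^2 - cos t * y + 1 - a)"
    using assms(3) cos_zsub[of t] by simp
  thus ?thesis using sin_pos_on_arc[OF assms(1,2)] unfolding rhs_def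
    by (simp add: field_simps power2_eq_square)
qed

lemma solution_from_riccati:
  assumes cont: "continuous_on {0..1/2} H"
    and deriv: "\<And>z. 0 < z \<Longrightarrow> z \<le> 1/2 \<Longrightarrow> (H has_real_derivative H' z) (at z)"
    and riccati: "\<And>z. 0 < z \<Longrightarrow> z \<le> 1/2 \<Longrightarrow>
                    2 * z * (1 - z) * H' z = - (a * (H z)^2 - (1 - 2 * z) * H z + 1 - a)"
    and init: "H 0 = 1"
  shows "is_solution a (\<lambda>t. H (zsub t))"
  unfolding is_solution_def C0C1_with_deriv_def
proof (intro conjI exI ballI)
  show "continuous_on {0..pi/2} (\<lambda>t. H (zsub t))"
    using zsub_range by (intro continuous_on_compose2[OF cont zsub_cont]) auto
  fix t :: real assume t: "t \<in> {0<..pi/2}"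
  have z: "0 < zsub t" "zsub t \<le> 1/2" using zsub_pos[of t] zsub_range[of t] t by auto
  have "((\<lambda>t. H (zsub t)) has_real_derivative H' (zsub t) * (sin t / 2)) (at t within {0<..pi/2})"
    by (rule DERIV_chain2[OF deriv[OF z] zsub_has_deriv])
  moreover have "H' (zsub t) * (sin t / 2) = rhs a t (H (zsub t))"
    using ode_from_riccati riccati[OF z] t by auto
  ultimately show "((\<lambda>t. H (zsub t)) has_real_derivative rhs a t (H (zsub t))) (at t within {0<..pi/2})"
    by simp
next
  have "continuous_on {0<..pi/2} (\<lambda>t. H (zsub t))"
    using zsub_range by (intro continuous_on_compose2[OF cont zsub_cont]) auto
  moreover have "\<forall>t\<in>{0<..pi/2}. sin t \<noteq> 0" using sin_pos_on_arc by force
  ultimately show "continuous_on {0<..pi/2} (\<lambda>t. rhs a t (H (zsub t)))"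
    unfolding rhs_def by (intro continuous_intros) auto
qed (use init in auto)

definition hsol :: "real \<Rightarrow> real \<Rightarrow> real" where
  "hsol a t = ric a (zsub t)"

lemma ric_cont: "1/2 \<le> a \<Longrightarrow> a < 1 \<Longrightarrow> continuous_on {0..1/2} (ric a)"
  by (rule continuous_at_imp_continuous_on) (auto intro!: DERIV_isCont[OF ric_has_deriv])

lemma hsol_solution: "1/2 \<le> a \<Longrightarrow> a < 1 \<Longrightarrow> is_solution a (hsol a)"
  unfolding hsol_def[abs_def]
  by (rule solution_from_riccati[OF ric_cont _ ric_riccati]) (auto intro: ric_has_deriv)

lemma hsol_bounds:
  assumes "1/2 \<le> a" "a < 1" "0 < t" "t \<le> pi/2"
  shows "0 \<le> hsol a t" "hsol a t < 1"
  using ric_ge[OF assms(1,2), of "zsub t"] ric_lt_1[OF assms(1,2), of "zsub t"]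
    zsub_range[of t] zsub_pos[of t] assms by (auto simp: hsol_def)


section \<open>A comparison principle for (*) when a > 1/2\<close>

text \<open>Gronwall's inequality in differential form: d' \<le> M d forces d to grow at most
  like exp(M t), since d(t) exp(-M t) is non-increasing.\<close>
lemma gronwall_differential:
  fixes d d' :: "real \<Rightarrow> real"
  assumes "a \<le> b" "continuous_on {a..b} d"
    and "\<And>t. a < t \<Longrightarrow> t < b \<Longrightarrow> (d has_real_derivative d' t) (at t)"
    and "\<And>t. a < t \<Longrightarrow> t < b \<Longrightarrow> d' t \<le> M * d t"
  shows "d b \<le> exp (M * (b - a)) * d a"
proof -
  define e where "e t = d t * exp (- (M * t))" for t
  have "e b \<le> e a"
  proof (rule DERIV_nonpos_imp_decreasing_open[OF assms(1)])
    fix t assume t: "a < t" "t < b"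
    have "(e has_real_derivative (d' t - M * d t) * exp (- (M * t))) (at t)"
      unfolding e_def[abs_def] using assms(3)[OF t]
      by (auto intro!: derivative_eq_intros simp: algebra_simps)
    moreover have "(d' t - M * d t) * exp (- (M * t)) \<le> 0"
      using assms(4)[OF t] by (simp add: mult_nonpos_nonneg)
    ultimately show "\<exists>y. (e has_real_derivative y) (at t) \<and> y \<le> 0" by blast
  qed (unfold e_def, intro continuous_intros assms(2))
  hence "d b * exp (- (M * b)) * exp (M * b) \<le> d a * exp (- (M * a)) * exp (M * b)"
    by (simp add: e_def)
  thus ?thesis by (simp add: exp_minus_inverse mult_exp_exp algebra_simps flip: exp_add)
qed

lemma last_zero_before:
  fixes d :: "real \<Rightarrow> real"
  assumes "0 \<le> t1" "continuous_on {0..t1} d" "d 0 \<le> 0" "0 < d t1"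
  shows "\<exists>t0. 0 \<le> t0 \<and> t0 < t1 \<and> d t0 = 0 \<and> (\<forall>t\<in>{t0<..t1}. 0 < d t)"
proof -
  define S where "S = {t\<in>{0..t1}. d t \<le> 0}"
  have "closed S"
  proof -
    have "closed ({0..t1} \<inter> d -` {..0})"
      by (rule continuous_closed_preimage[OF assms(2)]) auto
    moreover have "{0..t1} \<inter> d -` {..0} = S" by (auto simp: S_def)
    ultimately show ?thesis by simp
  qed
  moreover have "0 \<in> S" using assms by (auto simp: S_def)
  moreover have bdd: "bdd_above S" unfolding S_def by (rule bdd_aboveI[of _ t1]) auto
  ultimately have t0S: "Sup S \<in> S" by (intro closed_contains_Sup) auto
  define t0 where "t0 = Sup S"
  have above: "s \<le> t0" if "s \<in> S" for s unfolding t0_def by (intro cSup_upper that bdd)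
  have t0: "0 \<le> t0" "t0 \<le> t1" "d t0 \<le> 0" using t0S by (auto simp: t0_def S_def)
  have pos: "0 < d t" if "t0 < t" "t \<le> t1" for t
    using above[of t] that t0 by (force simp: S_def)
  have "d t0 = 0"
  proof (rule ccontr)
    assume "d t0 \<noteq> 0"
    hence "d t0 \<le> 0" "0 \<le> d t1" "t0 \<le> t1" using t0 assms by auto
    moreover have "continuous_on {t0..t1} d" using assms(2) t0 by (auto elim!: continuous_on_subset)
    ultimately obtain s where s: "t0 \<le> s" "s \<le> t1" "d s = 0" using IVT'[of d t0 0 t1] by blast
    hence "s \<in> S" using t0 by (auto simp: S_def)
    thus False using above s \<open>d t0 \<noteq> 0\<close> by force
  qed
  moreover have "t0 < t1" using t0 assms \<open>d t0 = 0\<close> by (cases "t0 = t1") auto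
  ultimately show ?thesis using t0 pos by auto
qed

text \<open>The coefficient A(t) = (a(u+v) - cos t)/sin t of the linearised difference equation
  is bounded above just to the right of any t0 \<in> [0, \<pi>/2): for t0 > 0 by continuity,
  and for t0 = 0 because A > 0 near 0 when u 0 = v 0 = 1 and a > 1/2.\<close>
lemma coefficient_bounded_above:
  assumes a: "1/2 < a" and cont: "continuous_on {0..pi/2} u" "continuous_on {0..pi/2} v"
    and t: "0 \<le> t0" "t0 < t1" "t1 \<le> pi/2"
    and init: "t0 = 0 \<Longrightarrow> u 0 = 1 \<and> v 0 = 1"
  shows "\<exists>s M. t0 < s \<and> s \<le> t1 \<and> (\<forall>t\<in>{t0<..<s}. - ((a*(u t+v t) - cos t) / sin t) \<le> M)"
proof (cases "t0 = 0")
  case True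
  define g where "g t = a * (u t + v t) - cos t" for t
  have "continuous_on {0..pi/2} g" unfolding g_def by (intro continuous_intros cont)
  hence "continuous (at 0 within {0..pi/2}) g"
    by (rule continuous_on_imp_continuous_within) auto
  moreover have "0 < g 0" using init True a by (simp add: g_def)
  ultimately obtain e where e: "0 < e" "\<And>s. s \<in> {0..pi/2} \<Longrightarrow> dist s 0 < e \<Longrightarrow> dist (g s) (g 0) < g 0"
    unfolding continuous_within_eps_delta by metis
  define s where "s = min t1 (e/2)"
  have "0 \<le> (a*(u t+v t) - cos t) / sin t" if "0 < t" "t < s" for t
  proof -
    have "dist (g t) (g 0) < g 0" using e that t by (intro e(2)) (auto simp: s_def dist_real_def)
    hence "0 \<le> g t" by (simp add: dist_real_def)
    thus ?thesis using sin_pos_on_arc[of t] that t by (auto simp: g_def s_def)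
  qed
  hence "\<forall>t\<in>{t0<..<s}. - ((a*(u t+v t) - cos t) / sin t) \<le> 0" using True by auto
  moreover have "t0 < s" "s \<le> t1" using True e t by (auto simp: s_def)
  ultimately show ?thesis by blast
next
  case False
  define A where "A t = (a*(u t+v t) - cos t) / sin t" for t
  have sub: "{t0..t1} \<subseteq> {0..pi/2}" using t by auto
  have cA: "continuous_on {t0..t1} A"
  proof -
    have "\<forall>t\<in>{t0..t1}. sin t \<noteq> 0"
    proof
      fix t assume "t \<in> {t0..t1}"
      hence "0 < t" "t \<le> pi/2" using t False by auto
      thus "sin t \<noteq> 0" using sin_pos_on_arc[of t] by simp
    qed
    thus ?thesis unfolding A_def
      by (intro continuous_intros continuous_on_subset[OF cont(1) sub]
                continuous_on_subset[OF cont(2) sub])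
  qed
  obtain M where M: "\<forall>t\<in>{t0..t1}. norm (A t) \<le> M"
    using compact_imp_bounded[OF compact_continuous_image[OF cA compact_Icc]]
    unfolding bounded_iff by auto
  have "- A t \<le> M" if "t \<in> {t0<..<t1}" for t
    using M that by (auto simp: abs_le_iff)
  thus ?thesis using t by (intro exI[of _ t1] exI[of _ M]) (auto simp: A_def)
qed

lemma deriv_at_interior:
  assumes "(f has_real_derivative D) (at t within {0<..pi/2})" "0 < t" "t < pi/2"
  shows "(f has_real_derivative D) (at t)"
proof -
  have "(f has_real_derivative D) (at t within {0<..<pi/2})"
    using assms(1) by (rule DERIV_subset) auto
  moreover have "at t within {0<..<pi/2} = at t"
    by (rule at_within_open) (use assms(2,3) in auto)
  ultimately show ?thesis by simp
qed

lemma rhs_diff: "sin t \<noteq> 0 \<Longrightarrow> rhs a t x - rhs a t y = - ((a*(x+y) - cos t) / sin t) * (x - y)"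
  by (simp add: rhs_def field_simps power2_eq_square)

text \<open>Comparison principle: for a > 1/2 a subsolution starting at or below 1 stays below a
  supersolution starting at or above 1.  The difference d = u - v satisfies d' \<le> -A d;
  after its last zero t0 it is positive, but Gronwall keeps it at 0 near t0.\<close>
lemma comparison:
  assumes a: "1/2 < a"
    and u: "C0C1_with_deriv u u'" "\<forall>t\<in>{0<..pi/2}. u' t \<le> rhs a t (u t)" "u 0 \<le> 1"
    and v: "C0C1_with_deriv v v'" "\<forall>t\<in>{0<..pi/2}. rhs a t (v t) \<le> v' t" "1 \<le> v 0"
  shows "\<forall>t\<in>{0..pi/2}. u t \<le> v t"
proof (rule ccontr)
  assume "\<not> ?thesis"
  then obtain t1 where t1: "0 \<le> t1" "t1 \<le> pi/2" "v t1 < u t1" by (auto simp: not_le)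
  define d where "d t = u t - v t" for t
  define A where "A t = (a*(u t+v t) - cos t) / sin t" for t
  have cu: "continuous_on {0..pi/2} u" and cv: "continuous_on {0..pi/2} v"
    using u(1) v(1) by (auto simp: C0C1_with_deriv_def)
  have cd: "continuous_on {0..pi/2} d" unfolding d_def by (intro continuous_intros cu cv)
  have d_deriv: "(d has_real_derivative (u' t - v' t)) (at t)" if "0 < t" "t < pi/2" for t
    using u(1) v(1) that unfolding d_def C0C1_with_deriv_def
    by (intro derivative_intros deriv_at_interior) auto
  have d'_le: "u' t - v' t \<le> - A t * d t" if "0 < t" "t \<le> pi/2" for t
  proof -
    have "u' t \<le> rhs a t (u t)" "rhs a t (v t) \<le> v' t" using u(2) v(2) that by auto
    hence "u' t - v' t \<le> rhs a t (u t) - rhs a t (v t)" by simp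
    also have "\<dots> = - A t * d t"
      using rhs_diff sin_pos_on_arc[OF that] by (simp add: A_def d_def)
    finally show ?thesis .
  qed
  have "continuous_on {0..t1} d" using cd by (rule continuous_on_subset) (use t1 in auto)
  then obtain t0 where t0: "0 \<le> t0" "t0 < t1" "d t0 = 0" "\<forall>t\<in>{t0<..t1}. 0 < d t"
    using last_zero_before[of t1 d] t1 u(3) v(3) by (auto simp: d_def)
  have "t0 = 0 \<Longrightarrow> u 0 = 1 \<and> v 0 = 1" using t0(3) u(3) v(3) by (simp add: d_def)
  then obtain s M where s: "t0 < s" "s \<le> t1" "\<forall>t\<in>{t0<..<s}. - A t \<le> M"
    using coefficient_bounded_above[OF a cu cv t0(1,2) t1(2)] unfolding A_def by blast
  have "d s \<le> exp (M * (s - t0)) * d t0"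
  proof (rule gronwall_differential[where d' = "\<lambda>t. u' t - v' t"])
    show "continuous_on {t0..s} d" using cd by (rule continuous_on_subset) (use t0 s t1 in auto)
    fix t assume t: "t0 < t" "t < s"
    show "(d has_real_derivative u' t - v' t) (at t)" using d_deriv t t0 s t1 by auto
    have "0 < d t" using t0(4) t s by auto
    hence "- A t * d t \<le> M * d t" using s(3) t by (intro mult_right_mono) auto
    thus "u' t - v' t \<le> M * d t" using d'_le[of t] t t0 s t1 by auto
  qed (use s in auto)
  moreover have "0 < d s" using t0(4) s by auto
  ultimately show False using t0(3) by simp
qed

section \<open>Uniqueness, comparison with supersolutions and monotonicity in a\<close>

lemma solution_le_supersolution:
  assumes "1/2 < a" "is_solution a h" "is_supersolution a hb"
  shows "\<forall>t\<in>{0..pi/2}. h t \<le> hb t"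
proof -
  obtain h' where h: "C0C1_with_deriv h h'" "\<forall>t\<in>{0<..pi/2}. h' t = rhs a t (h t)" "h 0 = 1"
    using assms(2) unfolding is_solution_def by blast
  obtain hb' where "C0C1_with_deriv hb hb'" "\<forall>t\<in>{0<..pi/2}. rhs a t (hb t) \<le> hb' t" "1 \<le> hb 0"
    using assms(3) unfolding is_supersolution_def by blast
  with h show ?thesis by (intro comparison[OF assms(1)]) auto
qed

text \<open>Uniqueness: a solution is both a sub- and a supersolution.\<close>
lemma solution_unique:
  assumes "1/2 < a" "is_solution a g" "is_solution a h"
  shows "\<forall>t\<in>{0..pi/2}. g t = h t"
proof -
  have "is_supersolution a g" "is_supersolution a h"
    using assms(2,3) unfolding is_solution_def is_supersolution_def by force+
  thus ?thesis using solution_le_supersolution[OF assms(1)] assms(2,3) by (meson order.antisym)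
qed

lemma rhs_strict_mono_alpha:
  assumes "a1 < a2" "\<bar>y\<bar> < 1" "0 < sin t"
  shows "rhs a1 t y < rhs a2 t y"
proof -
  have "0 < 1 - y^2" using assms(2) by (simp add: abs_square_less_1)
  hence "0 < (a2 - a1) * (1 - y^2) / sin t" using assms(1,3) by simp
  moreover have "rhs a2 t y - rhs a1 t y = (a2 - a1) * (1 - y^2) / sin t"
    using assms(3) by (simp add: rhs_def field_simps power2_eq_square)
  ultimately show ?thesis by simp
qed

lemma deriv_nonneg_at_left_max:
  fixes f :: "real \<Rightarrow> real"
  assumes "(f has_real_derivative D) (at t within {0<..T})" "0 < t" "t \<le> T"
    and "\<And>s. 0 < s \<Longrightarrow> s \<le> t \<Longrightarrow> f s \<le> f t"
  shows "0 \<le> D"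
proof (rule ccontr)
  assume "\<not> 0 \<le> D"
  then obtain e where e: "0 < e" "\<And>h. 0 < h \<Longrightarrow> t - h \<in> {0<..T} \<Longrightarrow> h < e \<Longrightarrow> f t < f (t - h)"
    using has_real_derivative_neg_dec_left[OF assms(1)] by (auto simp: not_le)
  define h where "h = min e t / 2"
  have "0 < h" "h < e" "t - h \<in> {0<..T}" using e assms(2,3) by (auto simp: h_def)
  hence "f t < f (t - h)" using e(2) by blast
  moreover have "f (t - h) \<le> f t" using \<open>0 < h\<close> \<open>t - h \<in> {0<..T}\<close> by (intro assms(4)) auto
  ultimately show False by simp
qed

text \<open>Strict monotonicity in a: h(a1,\<cdot>) is a strict subsolution for a2 because 0 \<le> h(a1,\<cdot>) < 1,
  so it lies below h(a2,\<cdot>); a touching point would contradict the strict inequality of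
  the derivatives there.\<close>
lemma solution_strict_mono:
  assumes a: "1/2 < a1" "a1 < a2" "a2 < 1"
    and s1: "is_solution a1 h1" and s2: "is_solution a2 h2"
  shows "\<forall>t\<in>{0<..pi/2}. h1 t < h2 t"
proof -
  obtain h1' where h1: "C0C1_with_deriv h1 h1'" "\<forall>t\<in>{0<..pi/2}. h1' t = rhs a1 t (h1 t)" "h1 0 = 1"
    using s1 unfolding is_solution_def by blast
  obtain h2' where h2: "C0C1_with_deriv h2 h2'" "\<forall>t\<in>{0<..pi/2}. h2' t = rhs a2 t (h2 t)" "h2 0 = 1"
    using s2 unfolding is_solution_def by blast
  have gap: "rhs a1 t (h1 t) < rhs a2 t (h1 t)" if t: "0 < t" "t \<le> pi/2" for t
  proof -
    have "h1 t = hsol a1 t"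
      using solution_unique[of a1 h1 "hsol a1"] hsol_solution[of a1] a s1 t by auto
    hence "\<bar>h1 t\<bar> < 1" using hsol_bounds[of a1 t] a t by auto
    thus ?thesis using rhs_strict_mono_alpha a(2) sin_pos_on_arc[OF t] by blast
  qed
  have le: "\<forall>t\<in>{0..pi/2}. h1 t \<le> h2 t"
    using h1 h2 gap a by (intro comparison[of a2 h1 h1' h2 h2']) (auto intro: less_imp_le)
  show ?thesis
  proof (intro ballI, rule ccontr)
    fix t assume t: "t \<in> {0<..pi/2}" "\<not> h1 t < h2 t"
    moreover have "h1 t \<le> h2 t" using le t(1) by auto
    ultimately have touch: "h1 t = h2 t" by simp
    have "((\<lambda>s. h1 s - h2 s) has_real_derivative h1' t - h2' t) (at t within {0<..pi/2})"
      using h1(1) h2(1) t unfolding C0C1_with_deriv_def by (intro derivative_intros) auto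
    hence "0 \<le> h1' t - h2' t"
      by (rule deriv_nonneg_at_left_max) (use t le touch in auto)
    moreover have "h1' t - h2' t < 0" using h1(2) h2(2) gap[of t] t touch by auto
    ultimately show False by simp
  qed
qed

section \<open>The case a = 1/2: a one-parameter family of solutions\<close>

text \<open>For a = 1/2 every H = ric(1/2) + W solves the Riccati equation as soon as W solves the
  Bernoulli equation 2z(1-z) W' = -(W^2/2 + 4z(1-z)(F'/F) W); the substitution W = 1/(F^2 Y)
  linearises it to Y' = 1/(4z(1-z)F^2).  Its solutions Y_K with Y_K \<rightarrow> -\<infinity> at 0 give W_K \<rightarrow> 0,
  hence a continuum of solutions of (*) with h(0) = 1.\<close>

lemma riccati_add_bernoulli:
  fixes q c R R' W W' :: real
  assumes "q * R' = - ((1/2) * R^2 - c * R + 1 - 1/2)"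
    and "q * W' = - (W^2 / 2 + (R - c) * W)"
  shows "q * (R' + W') = - ((1/2) * (R + W)^2 - c * (R + W) + 1 - 1/2)"
  using assms by (simp add: algebra_simps power2_eq_square)

text \<open>The integrand 1/(z(1-z)F^2) - 1/(z(1-z)), written via F = 1 + z G so that it is
  visibly continuous (and nonpositive) at z = 0.\<close>
definition log_corr :: "real \<Rightarrow> real" where
  "log_corr z = - (hyp_tail (1/2) z * (2 + z * hyp_tail (1/2) z)) / ((1 - z) * (hyp (1/2) z)^2)"

lemma log_corr_cont: "continuous_on {0..3/4} log_corr"
proof (rule continuous_at_imp_continuous_on, rule ballI)
  fix z :: real assume z: "z \<in> {0..3/4}"
  have "hyp (1/2) z \<noteq> 0" using hyp_ge_1[of "1/2" z] z by auto
  moreover have "isCont (hyp (1/2)) z"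
    by (rule DERIV_isCont[OF hyp_has_deriv[where A = UNIV]]) (use z in auto)
  ultimately show "isCont log_corr z" unfolding log_corr_def using z
    by (intro continuous_intros hyp_tail_cont) auto
qed

lemma log_corr_nonpos: "0 \<le> z \<Longrightarrow> z \<le> 3/4 \<Longrightarrow> log_corr z \<le> 0"
  using hyp_tail_nonneg[of "1/2" z] hyp_ge_1[of "1/2" z]
  by (simp add: log_corr_def divide_nonneg_pos)

lemma log_corr_eq:
  assumes "0 < z" "z < 1"
  shows "log_corr z = 1 / (z * (1-z) * (hyp (1/2) z)^2) - 1 / (z * (1-z))"
proof -
  define F G where "F = hyp (1/2) z" and "G = hyp_tail (1/2) z"
  have F_eq: "F = 1 + z * G" using hyp_eq_tail[of "1/2" z] assms by (simp add: F_def G_def)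
  have F0: "F \<noteq> 0" using hyp_ge_1[of "1/2" z] assms by (simp add: F_def)
  have "F^2 / (z * (1-z) * F^2) = 1 / (z * (1-z))" using F0 by simp
  hence "1 / (z * (1-z) * F^2) - 1 / (z * (1-z)) = (1 - F^2) / (z * (1-z) * F^2)"
    by (simp add: diff_divide_distrib)
  also have "1 - F^2 = z * (- (G * (2 + z * G)))"
    by (simp add: F_eq power2_eq_square algebra_simps)
  also have "z * (- (G * (2 + z * G))) / (z * (1-z) * F^2) = - (G * (2 + z * G)) / ((1 - z) * F^2)"
    using assms F0 by (simp add: field_simps)
  finally show ?thesis by (simp add: log_corr_def F_def G_def)
qed

definition bern_Y :: "real \<Rightarrow> real \<Rightarrow> real" where
  "bern_Y K z = K + (ln z - ln (1 - z) + integral {0..z} log_corr) / 4"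

lemma bern_Y_has_deriv:
  assumes "0 < z" "z \<le> 1/2"
  shows "(bern_Y K has_real_derivative 1 / (4 * z * (1 - z) * (hyp (1/2) z)^2)) (at z)"
proof -
  have "((\<lambda>x. integral {0..x} log_corr) has_real_derivative log_corr z) (at z within {0..3/4})"
    by (rule integral_has_real_derivative[OF log_corr_cont]) (use assms in auto)
  hence "((\<lambda>x. integral {0..x} log_corr) has_real_derivative log_corr z) (at z within {0<..<3/4})"
    by (rule DERIV_subset) auto
  moreover have "at z within {0<..<3/4} = at z" using assms by (intro at_within_open) auto
  ultimately have int_deriv: "((\<lambda>x. integral {0..x} log_corr) has_real_derivative log_corr z) (at z)"
    by simp
  have "(bern_Y K has_real_derivative (1/z - (- 1) / (1 - z) + log_corr z) / 4) (at z)"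
    unfolding bern_Y_def[abs_def] using assms by (auto intro!: derivative_eq_intros int_deriv)
  moreover have "(1/z - (- 1) / (1 - z) + log_corr z) / 4 = 1 / (4 * z * (1 - z) * (hyp (1/2) z)^2)"
    using log_corr_eq[of z] assms hyp_ge_1[of "1/2" z] by (simp add: field_simps)
  ultimately show ?thesis by (rule DERIV_cong)
qed

text \<open>Since the integral term is \<le> 0 and -ln(1-z) \<le> ln 2, Y_K(z) \<le> K + ln(2z)/4 \<le> K.\<close>
lemma bern_Y_upper:
  assumes "0 < z" "z \<le> 1/2"
  shows "bern_Y K z \<le> K + ln (2 * z) / 4" and "bern_Y K z \<le> K"
proof -
  have int: "integral {0..z} log_corr \<le> 0"
  proof -
    have "continuous_on {0..z} log_corr" using log_corr_cont by (rule continuous_on_subset) (use assms in auto)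
    hence "integral {0..z} log_corr \<le> integral {0..z} (\<lambda>_. 0::real)"
      using log_corr_nonpos assms by (intro integral_le integrable_continuous_real) auto
    thus ?thesis by simp
  qed
  have "- ln (1 - z) \<le> ln 2" using ln_le_cancel_iff[of "1/2" "1 - z"] assms by (simp add: ln_div)
  thus "bern_Y K z \<le> K + ln (2 * z) / 4" using int assms by (simp add: bern_Y_def ln_mult)
  moreover have "ln (2 * z) \<le> 0" using assms by simp
  ultimately show "bern_Y K z \<le> K" by linarith
qed

definition bern_W :: "real \<Rightarrow> real \<Rightarrow> real" where
  "bern_W K z = (if z = 0 then 0 else 1 / ((hyp (1/2) z)^2 * bern_Y K z))"

definition bern_W_d :: "real \<Rightarrow> real \<Rightarrow> real" where
  "bern_W_d K z = - (2 * hyp (1/2) z * hyp_d1 (1/2) z * bern_Y K z + 1 / (4 * z * (1 - z)))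
                   / ((hyp (1/2) z)^2 * bern_Y K z)^2"

context
  fixes K :: real
  assumes K: "K < 0"
begin

lemma bern_W_has_deriv:
  assumes "0 < z" "z \<le> 1/2"
  shows "(bern_W K has_real_derivative bern_W_d K z) (at z)"
proof -
  have Y: "bern_Y K z < 0" using bern_Y_upper(2)[OF assms, of K] K by simp
  have F: "1 \<le> hyp (1/2) z" using hyp_ge_1[of "1/2" z] assms by simp
  have z: "\<bar>z\<bar> < 1" using assms by simp
  define F where "F = hyp (1/2)"
  have dF2: "((\<lambda>z. (F z)^2) has_real_derivative 2 * (hyp_d1 (1/2) z * F z)) (at z)"
    using DERIV_power[OF hyp_has_deriv[of "1/2" z UNIV], of 2] z by (simp add: F_def)
  have "((\<lambda>z. (F z)^2 * bern_Y K z) has_real_derivative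
           2 * (hyp_d1 (1/2) z * F z) * bern_Y K z + (1 / (4 * z * (1 - z) * (F z)^2)) * (F z)^2) (at z)"
    by (rule DERIV_mult[OF dF2 bern_Y_has_deriv[OF assms, of K, folded F_def]])
  moreover have "(F z)^2 * bern_Y K z \<noteq> 0" using Y F by (simp add: F_def)
  ultimately have dq: "((\<lambda>z. 1 / ((F z)^2 * bern_Y K z)) has_real_derivative
      (0 * ((F z)^2 * bern_Y K z) - 1 * (2 * (hyp_d1 (1/2) z * F z) * bern_Y K z
          + (1 / (4 * z * (1 - z) * (F z)^2)) * (F z)^2))
      / (((F z)^2 * bern_Y K z) * ((F z)^2 * bern_Y K z))) (at z)"
    by (intro DERIV_divide DERIV_const)
  have "(1 / (4 * z * (1 - z) * (F z)^2)) * (F z)^2 = 1 / (4 * z * (1 - z))"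
    using F by (simp add: F_def)
  hence "(0 * ((F z)^2 * bern_Y K z) - 1 * (2 * (hyp_d1 (1/2) z * F z) * bern_Y K z
          + (1 / (4 * z * (1 - z) * (F z)^2)) * (F z)^2))
      / (((F z)^2 * bern_Y K z) * ((F z)^2 * bern_Y K z)) = bern_W_d K z"
    by (simp add: bern_W_d_def F_def power2_eq_square mult.commute mult.left_commute)
  with dq have "((\<lambda>z. 1 / ((hyp (1/2) z)^2 * bern_Y K z)) has_real_derivative bern_W_d K z) (at z)"
    by (simp add: F_def)
  thus ?thesis
    by (rule has_field_derivative_transform_within_open[where S = "{0<..<1}"])
       (use assms in \<open>auto simp: bern_W_def\<close>)
qed

text \<open>Since F \<ge> 1, the bounds on Y_K give 1/K \<le> W_K < 0 and |W_K| \<le> 1/|K + ln(2z)/4|.\<close>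
lemma bern_W_bounds:
  assumes "0 < z" "z \<le> 1/2"
  shows "1/K \<le> bern_W K z" "bern_W K z < 0" "\<bar>bern_W K z\<bar> \<le> - 1 / (K + ln (2 * z) / 4)"
proof -
  define P where "P = (hyp (1/2) z)^2 * bern_Y K z"
  have F: "1 \<le> (hyp (1/2) z)^2" using hyp_ge_1[of "1/2" z] assms by (simp add: one_le_power)
  have Y: "bern_Y K z \<le> K + ln (2 * z) / 4" "bern_Y K z \<le> K" using bern_Y_upper[OF assms] by auto
  have B: "K + ln (2 * z) / 4 < 0" using K assms by (simp add: ln_le_zero_iff add_neg_nonpos)
  have "P \<le> 1 * bern_Y K z" unfolding P_def using F Y K by (intro mult_right_mono_neg) auto
  hence P: "P \<le> K + ln (2 * z) / 4" "P \<le> K" using Y by auto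
  have W: "bern_W K z = 1 / P" using assms by (simp add: bern_W_def P_def)
  show "1/K \<le> bern_W K z" using P(2) K unfolding W by (simp add: divide_le_eq_1 le_divide_eq field_simps)
  show "bern_W K z < 0" using P(2) K unfolding W by (simp add: divide_neg_pos)
  show "\<bar>bern_W K z\<bar> \<le> - 1 / (K + ln (2 * z) / 4)"
    using P(1) B unfolding W by (simp add: abs_div_pos field_simps)
qed

text \<open>W_K(z) \<rightarrow> 0 as z \<rightarrow> 0+, since Y_K(z) \<le> K + ln(2z)/4 \<rightarrow> -\<infinity>.\<close>
lemma bern_W_tendsto_0: "(bern_W K \<longlongrightarrow> 0) (at_right 0)"
proof (rule tendstoI)
  fix e :: real assume e: "0 < e"
  define \<delta> where "\<delta> = exp (- 4 / e) / 2"
  have \<delta>: "0 < \<delta>" "\<delta> \<le> 1/2" using exp_le_one_iff[of "- 4 / e"] e by (auto simp: \<delta>_def)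
  have "dist (bern_W K z) 0 < e" if z: "0 < z" "z < \<delta>" for z
  proof -
    have "2 * z < exp (- 4 / e)" using z by (simp add: \<delta>_def)
    hence "ln (2 * z) < - 4 / e" using z ln_less_cancel_iff[of "2 * z" "exp (- 4 / e)"] by simp
    hence B: "K + ln (2 * z) / 4 < - 1 / e" using K by (simp add: field_simps)
    have "0 < - (K + ln (2 * z) / 4)" using B e by (smt (verit) divide_neg_pos)
    moreover have "1 < e * - (K + ln (2 * z) / 4)" using B e by (simp add: field_simps)
    ultimately have "- 1 / (K + ln (2 * z) / 4) < e" by (simp add: divide_less_eq field_simps)
    thus ?thesis using bern_W_bounds(3)[of z] z \<delta> by simp
  qed
  thus "eventually (\<lambda>z. dist (bern_W K z) 0 < e) (at_right 0)"
    using eventually_at_right_real[OF \<delta>(1)] by (auto elim!: eventually_mono)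
qed

lemma bern_W_cont: "continuous_on {0..1/2} (bern_W K)"
  unfolding continuous_on_eq_continuous_within
proof
  fix z :: real assume z: "z \<in> {0..1/2}"
  show "continuous (at z within {0..1/2}) (bern_W K)"
  proof (cases "z = 0")
    case True
    thus ?thesis using bern_W_tendsto_0
      by (simp add: continuous_within at_within_Icc_at_right bern_W_def)
  next
    case False
    hence "isCont (bern_W K) z" using z by (intro DERIV_isCont[OF bern_W_has_deriv]) auto
    thus ?thesis by (rule continuous_at_imp_continuous_at_within)
  qed
qed

lemma bern_W_bernoulli:
  assumes "0 < z" "z \<le> 1/2"
  shows "2 * z * (1 - z) * bern_W_d K z
           = - ((bern_W K z)^2 / 2 + (ric (1/2) z - (1 - 2*z)) * bern_W K z)"
proof -
  define F F' Y q where "F = hyp (1/2) z" and "F' = hyp_d1 (1/2) z" and "Y = bern_Y K z"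
    and "q = z * (1 - z)"
  have nz: "Y \<noteq> 0" "F \<noteq> 0" "q \<noteq> 0"
    using bern_Y_upper(2)[OF assms, of K] K hyp_ge_1[of "1/2" z] assms by (auto simp: Y_def F_def q_def)
  have r: "ric (1/2) z - (1 - 2*z) = 4 * q * F' / F"
    by (simp add: ric_def q_def F_def F'_def field_simps)
  have w: "bern_W K z = 1 / (F^2 * Y)" using assms by (simp add: bern_W_def F_def Y_def)
  have d: "bern_W_d K z = - (2 * F * F' * Y + 1 / (4 * q)) / (F^2 * Y)^2"
    by (simp add: bern_W_d_def F_def F'_def Y_def q_def mult.assoc)
  have "2 * q * (- (2 * F * F' * Y + 1 / (4 * q)) / (F^2 * Y)^2)
        = - ((1 / (F^2 * Y))^2 / 2 + (4 * q * F' / F) * (1 / (F^2 * Y)))"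
    using nz by (simp add: field_simps power2_eq_square)
  thus ?thesis unfolding w d r by (simp add: q_def mult.assoc)
qed

end

text \<open>A uniform lower bound for the base solution at a = 1/2: ric(1/2) \<ge> 1/8 on [0,1/2],
  using F \<le> 2 and F' \<ge> c_1 = 1/4 there.\<close>
lemma ric_half_ge:
  assumes "0 \<le> z" "z \<le> 1/2" shows "1/8 \<le> ric (1/2) z"
proof -
  have F: "1 \<le> hyp (1/2) z" "hyp (1/2) z \<le> 2"
    using hyp_ge_1[of "1/2" z] hyp_le_2[of "1/2" z] assms by auto
  have "hyp_coeff (1/2) 1 = 1/4" by (simp add: hyp_coeff.simps power2_eq_square)
  hence "1/4 \<le> hyp_d1 (1/2) z" using hyp_d1_ge[of "1/2" z] assms by simp
  hence "(1/4) / 2 \<le> hyp_d1 (1/2) z / hyp (1/2) z" using F by (intro frac_le) auto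
  moreover have "0 \<le> z * (1 - z)" using assms by simp
  ultimately have "1 - 2*z + 4 * (z * (1 - z)) * (1/8) \<le> 1 - 2*z + 4 * (z * (1 - z)) * (hyp_d1 (1/2) z / hyp (1/2) z)"
    by (intro add_left_mono mult_left_mono) auto
  also have "\<dots> = ric (1/2) z" by (simp add: ric_def field_simps)
  finally have "1 - 2*z + z * (1 - z) / 2 \<le> ric (1/2) z" by simp
  moreover have "z * (1 - z) = z - z * z" by (simp add: algebra_simps)
  moreover have "z * z \<le> z * (1/2)" using assms by (intro mult_left_mono) auto
  ultimately show ?thesis using assms by linarith
qed

definition Hfam :: "real \<Rightarrow> real \<Rightarrow> real" where
  "Hfam K z = ric (1/2) z + bern_W K z"

lemma Hfam_solution:
  assumes "K < 0" shows "is_solution (1/2) (\<lambda>t. Hfam K (zsub t))"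
proof (rule solution_from_riccati[where H' = "\<lambda>z. ric_d (1/2) z + bern_W_d K z"])
  show "continuous_on {0..1/2} (Hfam K)"
    unfolding Hfam_def by (intro continuous_intros ric_cont bern_W_cont assms) auto
  fix z :: real assume z: "0 < z" "z \<le> 1/2"
  show "(Hfam K has_real_derivative ric_d (1/2) z + bern_W_d K z) (at z)"
    unfolding Hfam_def[abs_def] using z
    by (intro DERIV_add ric_has_deriv bern_W_has_deriv assms) auto
  show "2 * z * (1 - z) * (ric_d (1/2) z + bern_W_d K z)
          = - (1/2 * (Hfam K z)^2 - (1 - 2*z) * Hfam K z + 1 - 1/2)"
    unfolding Hfam_def
    by (rule riccati_add_bernoulli[OF ric_riccati bern_W_bernoulli[OF assms z]]) (use z in auto)
qed (simp add: Hfam_def bern_W_def)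

lemma Hfam_pos:
  assumes "K \<le> -9" "0 \<le> z" "z \<le> 1/2" shows "0 < Hfam K z"
proof (cases "z = 0")
  case True thus ?thesis by (simp add: Hfam_def bern_W_def)
next
  case False
  hence "1/K \<le> bern_W K z" using bern_W_bounds(1)[of K z] assms by simp
  moreover have "- (1/9) \<le> 1/K" using assms by (simp add: field_simps)
  ultimately show ?thesis using ric_half_ge[of z] assms by (simp add: Hfam_def)
qed

lemma Hfam_inj:
  assumes "K1 < 0" "K2 < 0" "Hfam K1 (1/2) = Hfam K2 (1/2)" shows "K1 = K2"
proof -
  have F: "hyp (1/2) (1/2) \<noteq> 0" using hyp_ge_1[of "1/2" "1/2"] by simp
  have "bern_Y K1 (1/2) \<le> K1" "bern_Y K2 (1/2) \<le> K2" using bern_Y_upper(2)[of "1/2"] by auto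
  hence "bern_Y K1 (1/2) \<noteq> 0" "bern_Y K2 (1/2) \<noteq> 0" using assms by auto
  hence "(hyp (1/2) (1/2))^2 * bern_Y K1 (1/2) = (hyp (1/2) (1/2))^2 * bern_Y K2 (1/2)"
    using assms(3) F by (simp add: Hfam_def bern_W_def)
  hence "bern_Y K1 (1/2) = bern_Y K2 (1/2)" using F by simp
  thus ?thesis by (simp add: bern_Y_def)
qed

text \<open>K \<mapsto> (\<theta> \<mapsto> H_K(sin(\<theta>/2)^2)) embeds the interval (-10,-9) into the positive solutions.\<close>
lemma half_solutions_uncountable:
  "uncountable ((\<lambda>h. restrict h {0..pi/2}) `
      {h. is_solution (1/2) h \<and> (\<forall>\<theta>\<in>{0..pi/2}. h \<theta> > 0)})"
  (is "uncountable ?S")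
proof
  assume countable: "countable ?S"
  define f where "f K = restrict (\<lambda>t. Hfam K (zsub t)) {0..pi/2}" for K
  have "f ` {-10<..<-9} \<subseteq> ?S"
  proof
    fix x assume "x \<in> f ` {-10<..<-9}"
    then obtain K where K: "-10 < K" "K < -9" "x = f K" by auto
    have "is_solution (1/2) (\<lambda>t. Hfam K (zsub t))" using Hfam_solution K by simp
    moreover have "\<forall>t\<in>{0..pi/2}. 0 < Hfam K (zsub t)" using Hfam_pos zsub_range K by force
    ultimately show "x \<in> ?S" using K by (auto simp: f_def)
  qed
  moreover have "inj_on f {-10<..<-9}"
  proof (rule inj_onI)
    fix K1 K2 assume K: "K1 \<in> {-10<..<-9}" "K2 \<in> {-10<..<-9}" "f K1 = f K2"
    hence "f K1 (pi/2) = f K2 (pi/2)" by simp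
    hence "Hfam K1 (1/2) = Hfam K2 (1/2)" by (simp add: f_def)
    thus "K1 = K2" using Hfam_inj K by auto
  qed
  ultimately have "countable {-10<..<-9::real}"
    using countable_subset[OF _ countable] countable_image_inj_on by blast
  thus False using uncountable_open_interval[of "-10::real" "-9"] by simp
qed

theorem lemma3:
  shows "(\<forall>\<alpha>\<in>{1/2<..<1}. \<exists>h. is_solution \<alpha> h \<and>
            (\<forall>g. is_solution \<alpha> g \<longrightarrow> (\<forall>\<theta>\<in>{0..pi/2}. g \<theta> = h \<theta>)))
      \<and> (\<forall>\<alpha>1 \<alpha>2 h1 h2. 1/2 < \<alpha>1 \<and> \<alpha>1 < \<alpha>2 \<and> \<alpha>2 < 1 \<and>
            is_solution \<alpha>1 h1 \<and> is_solution \<alpha>2 h2 \<longrightarrow>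
            (\<forall>\<theta>\<in>{0<..pi/2}. h1 \<theta> < h2 \<theta>))
      \<and> uncountable ((\<lambda>h. restrict h {0..pi/2}) `
            {h. is_solution (1/2) h \<and> (\<forall>\<theta>\<in>{0..pi/2}. h \<theta> > 0)})
      \<and> (\<forall>\<alpha>\<in>{1/2<..<1}. \<forall>hb h. is_supersolution \<alpha> hb \<and> is_solution \<alpha> h \<longrightarrow>
            (\<forall>\<theta>\<in>{0..pi/2}. h \<theta> \<le> hb \<theta>))"
proof (intro conjI)
  show "\<forall>\<alpha>\<in>{1/2<..<1}. \<exists>h. is_solution \<alpha> h \<and>
          (\<forall>g. is_solution \<alpha> g \<longrightarrow> (\<forall>\<theta>\<in>{0..pi/2}. g \<theta> = h \<theta>))"
    using hsol_solution solution_unique by (metis greaterThanLessThan_iff less_imp_le)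
  show "\<forall>\<alpha>1 \<alpha>2 h1 h2. 1/2 < \<alpha>1 \<and> \<alpha>1 < \<alpha>2 \<and> \<alpha>2 < 1 \<and>
          is_solution \<alpha>1 h1 \<and> is_solution \<alpha>2 h2 \<longrightarrow> (\<forall>\<theta>\<in>{0<..pi/2}. h1 \<theta> < h2 \<theta>)"
    using solution_strict_mono by blast
  show "uncountable ((\<lambda>h. restrict h {0..pi/2}) `
          {h. is_solution (1/2) h \<and> (\<forall>\<theta>\<in>{0..pi/2}. h \<theta> > 0)})"
    by (rule half_solutions_uncountable)
  show "\<forall>\<alpha>\<in>{1/2<..<1}. \<forall>hb h. is_supersolution \<alpha> hb \<and> is_solution \<alpha> h \<longrightarrow>
          (\<forall>\<theta>\<in>{0..pi/2}. h \<theta> \<le> hb \<theta>)"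
    using solution_le_supersolution by auto
qed

end
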